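(* Let $n\ge1$ and $d\ge1$ be integers, and let $\mu_n$ be a symmetric measure on $(\mathbb{R}^d)^n$ (i.e. invariant under permutations of the $n$ coordinates $\xi_1,\dots,\xi_n\in\mathbb{R}^d$). Then for any $0<s\le t$ and any measurable non-negative function $h$ on $(0,\infty)^n\times(\mathbb{R}^d)^n$ for which the integrals make sense, $$\sum_{\rho\in\Sigma_n}\int_{T_n(t)}\int_{T_n(s)}\int_{(\mathbb{R}^d)^n}h(t_1,\dots,t_n,\xi_1,\dots,\xi_n)\,h(s_1,\dots,s_n,\xi_{\rho(1)},\dots,\xi_{\rho(n)})\,\mu_n(d\xi_1\cdots d\xi_n)\,ds_1\cdots ds_n\,dt_1\cdots dt_n$$ $$\le\frac{s^n+t^n}{2}\int_{T_n(t)}\int_{(\mathbb{R}^d)^n}|h(t_1,\dots,t_n,\xi_1,\dots,\xi_n)|^2\mu_n(d\xi_1\cdots d\xi_n)\,dt_1\cdots dt_n.$$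
   Context: $\Sigma_n$ is the set of permutations of $\{1,\dots,n\}$, and $T_n(t)=\{(t_1,\dots,t_n):0<t_1<\dots<t_n<t\}$. *)

theory Defs
  imports "HOL-Analysis.Analysis"
begin

text \<open>Points of a product space indexed by \<open>{..<n}\<close> (0-based indices: coordinate i
  corresponds to the paper's coordinate i+1).\<close>

definition simplexT :: "nat \<Rightarrow> real \<Rightarrow> (nat \<Rightarrow> real) set" where
  "simplexT n t = {x \<in> PiE {..<n} (\<lambda>_. UNIV).
      (\<forall>i<n. 0 < x i \<and> x i < t) \<and> (\<forall>i. Suc i < n \<longrightarrow> x i < x (Suc i))}"

definition lebn :: "nat \<Rightarrow> (nat \<Rightarrow> real) measure" where
  "lebn n = PiM {..<n} (\<lambda>_. lborel)"

definition symmetric_measure :: "nat \<Rightarrow> (nat \<Rightarrow> 'a::euclidean_space) measure \<Rightarrow> bool" where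
  "symmetric_measure n \<mu> \<longleftrightarrow>
     sets \<mu> = sets (PiM {..<n} (\<lambda>_. (borel :: 'a measure))) \<and>
     (\<forall>\<rho>. \<rho> permutes {..<n} \<longrightarrow>
        (\<forall>A \<in> sets \<mu>. emeasure \<mu> ((\<lambda>\<xi>. \<xi> \<circ> \<rho>) -` A \<inter> space \<mu>) = emeasure \<mu> A))"

end

theory Submission
  imports Defs
begin

text \<open>
  By AM-GM, \<open>h(t,\<xi>) h(s,\<xi>\<circ>\<rho>) \<le> (h(t,\<xi>)\<^sup>2 + h(s,\<xi>\<circ>\<rho>)\<^sup>2)/2\<close>, and the symmetry of \<open>\<mu>\<close> removes
  \<open>\<rho>\<close> from the integral of the second square. With \<open>Q(x) = \<integral> h(x,\<xi>)\<^sup>2 \<mu>(d\<xi>)\<close> the bound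
  separates the variables, so each permutation contributes at most
  \<open>(|T\<^sub>n(s)| \<integral>\<^bsub>T\<^sub>n(t)\<^esub> Q + |T\<^sub>n(t)| \<integral>\<^bsub>T\<^sub>n(s)\<^esub> Q)/2\<close>. As \<open>T\<^sub>n(s) \<subseteq> T\<^sub>n(t)\<close> and
  \<open>n! |T\<^sub>n(r)| \<le> r\<^sup>n\<close>, summing over the \<open>n!\<close> permutations gives the claim.

  Since \<open>\<mu>\<close> need not be \<open>\<sigma>\<close>-finite, \<open>Q\<close> need not be measurable, and the outer integrals
  are lower integrals. For these only subadditivity against a measurable summand and
  scaling by finite constants are used.
\<close>

lemma nn_integral_add_measurable_le:
  fixes f g :: "'a \<Rightarrow> ennreal"
  assumes [measurable]: "g \<in> borel_measurable M"
  shows "(\<integral>\<^sup>+x. g x + f x \<partial>M) \<le> (\<integral>\<^sup>+x. g x \<partial>M) + (\<integral>\<^sup>+x. f x \<partial>M)"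
proof -
  have "integral\<^sup>S M u \<le> (\<integral>\<^sup>+x. g x \<partial>M) + (\<integral>\<^sup>+x. f x \<partial>M)"
    if u: "simple_function M u" "u \<le> (\<lambda>x. g x + f x)" for u
  proof -
    have [measurable]: "u \<in> borel_measurable M"
      using u(1) by (rule borel_measurable_simple_function)
    \<comment> \<open>the test is needed where \<open>u x = g x = \<infinity>\<close>, since \<open>\<infinity> - \<infinity> = \<infinity>\<close>\<close>
    define v where "v x = (if u x \<le> g x then 0 else u x - g x)" for x
    have [measurable]: "v \<in> borel_measurable M"
      unfolding v_def by measurable
    have "u x \<le> g x + v x" for x
      by (auto simp: v_def add_diff_inverse_ennreal)
    then have "integral\<^sup>S M u \<le> (\<integral>\<^sup>+x. g x + v x \<partial>M)"
      using u(1) by (simp add: nn_integral_eq_simple_integral[symmetric] nn_integral_mono)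
    also have "\<dots> = (\<integral>\<^sup>+x. g x \<partial>M) + (\<integral>\<^sup>+x. v x \<partial>M)"
      by (rule nn_integral_add) measurable
    also have "(\<integral>\<^sup>+x. v x \<partial>M) \<le> (\<integral>\<^sup>+x. f x \<partial>M)"
      using u(2) by (intro nn_integral_mono) (auto simp: v_def le_fun_def ennreal_minus_le_iff)
    finally show ?thesis
      by (simp add: add_left_mono)
  qed
  then show ?thesis
    unfolding nn_integral_def[of M "\<lambda>x. g x + f x"] by (intro SUP_least) auto
qed

lemma nn_integral_cmult_le:
  fixes f :: "'a \<Rightarrow> ennreal"
  assumes "c < \<infinity>"
  shows "(\<integral>\<^sup>+x. c * f x \<partial>M) \<le> c * (\<integral>\<^sup>+x. f x \<partial>M)"
proof (cases "c = 0")
  case False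
  have "integral\<^sup>S M u \<le> c * (\<integral>\<^sup>+x. f x \<partial>M)"
    if u: "simple_function M u" "u \<le> (\<lambda>x. c * f x)" for u
  proof -
    have [measurable]: "u \<in> borel_measurable M"
      using u(1) by (rule borel_measurable_simple_function)
    have "integral\<^sup>S M u = (\<integral>\<^sup>+x. c * (u x / c) \<partial>M)"
      using u(1) False assms
      by (simp add: nn_integral_eq_simple_integral ennreal_times_divide mult.commute[of c]
          mult_divide_eq_ennreal)
    also have "\<dots> = c * (\<integral>\<^sup>+x. u x / c \<partial>M)"
      by (rule nn_integral_cmult) measurable
    also have "(\<integral>\<^sup>+x. u x / c \<partial>M) \<le> (\<integral>\<^sup>+x. f x \<partial>M)"
      using u(2) False
      by (intro nn_integral_mono divide_le_posI_ennreal) (auto simp: le_fun_def zero_less_iff_neq_zero)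
    finally show ?thesis
      by (simp add: mult_left_mono)
  qed
  then show ?thesis
    unfolding nn_integral_def[of M "\<lambda>x. c * f x"] by (intro SUP_least) auto
qed simp

lemma nn_set_integral_cmult_le:
  fixes f :: "'a \<Rightarrow> ennreal"
  assumes "c < \<infinity>"
  shows "(\<integral>\<^sup>+x\<in>A. c * f x \<partial>M) \<le> c * (\<integral>\<^sup>+x\<in>A. f x \<partial>M)"
  using nn_integral_cmult_le[OF assms, of M "\<lambda>x. f x * indicator A x"] by (simp add: mult.assoc)

lemma nn_set_integral_const_add_le:
  fixes f :: "'a \<Rightarrow> ennreal"
  assumes [measurable]: "A \<in> sets M"
  shows "(\<integral>\<^sup>+x\<in>A. a + f x \<partial>M) \<le> a * emeasure M A + (\<integral>\<^sup>+x\<in>A. f x \<partial>M)"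
proof -
  have "(\<integral>\<^sup>+x\<in>A. a + f x \<partial>M) = (\<integral>\<^sup>+x. a * indicator A x + f x * indicator A x \<partial>M)"
    by (intro nn_integral_cong) (simp split: split_indicator)
  also have "\<dots> \<le> (\<integral>\<^sup>+x. a * indicator A x \<partial>M) + (\<integral>\<^sup>+x\<in>A. f x \<partial>M)"
    by (intro nn_integral_add_measurable_le) measurable
  also have "\<dots> = a * emeasure M A + (\<integral>\<^sup>+x\<in>A. f x \<partial>M)"
    by (simp add: nn_integral_cmult_indicator)
  finally show ?thesis .
qed

lemma nn_set_integral_iterated_le_separable:
  fixes F :: "'a \<Rightarrow> 'b \<Rightarrow> ennreal" and G :: "'a \<Rightarrow> ennreal" and H :: "'b \<Rightarrow> ennreal"
  assumes "A \<in> sets M" and "B \<in> sets N" and "emeasure N B < \<infinity>"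
    and "\<And>x y. x \<in> A \<Longrightarrow> y \<in> B \<Longrightarrow> F x y \<le> G x + H y"
  shows "(\<integral>\<^sup>+x\<in>A. (\<integral>\<^sup>+y\<in>B. F x y \<partial>N) \<partial>M)
    \<le> emeasure N B * (\<integral>\<^sup>+x\<in>A. G x \<partial>M) + emeasure M A * (\<integral>\<^sup>+y\<in>B. H y \<partial>N)"
proof -
  have inner: "(\<integral>\<^sup>+y\<in>B. F x y \<partial>N) \<le> (\<integral>\<^sup>+y\<in>B. H y \<partial>N) + emeasure N B * G x" if "x \<in> A" for x
  proof -
    have "(\<integral>\<^sup>+y\<in>B. F x y \<partial>N) \<le> (\<integral>\<^sup>+y\<in>B. G x + H y \<partial>N)"
      using assms(4) that by (intro nn_integral_mono) (simp split: split_indicator)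
    also have "\<dots> \<le> G x * emeasure N B + (\<integral>\<^sup>+y\<in>B. H y \<partial>N)"
      using assms(2) by (rule nn_set_integral_const_add_le)
    finally show ?thesis
      by (simp add: ac_simps)
  qed
  have "(\<integral>\<^sup>+x\<in>A. (\<integral>\<^sup>+y\<in>B. F x y \<partial>N) \<partial>M)
      \<le> (\<integral>\<^sup>+x\<in>A. (\<integral>\<^sup>+y\<in>B. H y \<partial>N) + emeasure N B * G x \<partial>M)"
    using inner by (intro nn_integral_mono) (simp split: split_indicator)
  also have "\<dots> \<le> (\<integral>\<^sup>+y\<in>B. H y \<partial>N) * emeasure M A + (\<integral>\<^sup>+x\<in>A. emeasure N B * G x \<partial>M)"
    using assms(1) by (rule nn_set_integral_const_add_le)
  also have "(\<integral>\<^sup>+x\<in>A. emeasure N B * G x \<partial>M) \<le> emeasure N B * (\<integral>\<^sup>+x\<in>A. G x \<partial>M)"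
    using assms(3) by (rule nn_set_integral_cmult_le)
  finally show ?thesis
    by (simp add: ac_simps add_left_mono)
qed

lemma ennreal_mult_le_half_sum_squares:
  fixes a b :: real
  shows "ennreal (a * b) \<le> ennreal (1/2) * ennreal (\<bar>a\<bar>^2) + ennreal (1/2) * ennreal (\<bar>b\<bar>^2)"
proof -
  have "a * b \<le> 1/2 * \<bar>a\<bar>^2 + 1/2 * \<bar>b\<bar>^2"
    using sum_squares_bound[of a b] by simp
  then have "ennreal (a * b) \<le> ennreal (1/2 * \<bar>a\<bar>^2 + 1/2 * \<bar>b\<bar>^2)"
    by (rule ennreal_leI)
  also have "\<dots> = ennreal (1/2) * ennreal (\<bar>a\<bar>^2) + ennreal (1/2) * ennreal (\<bar>b\<bar>^2)"
    by (simp del: power2_abs ennreal_half flip: ennreal_plus ennreal_mult)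
  finally show ?thesis .
qed

lemma measurable_permute_coordinates:
  assumes "\<rho> permutes I"
  shows "(\<lambda>\<xi>. \<xi> \<circ> \<rho>) \<in> PiM I (\<lambda>_. M) \<rightarrow>\<^sub>M PiM I (\<lambda>_. M)"
  unfolding comp_def
proof (rule measurable_PiM_single')
  fix i assume "i \<in> I"
  then have "\<rho> i \<in> I"
    using permutes_in_image[OF assms] by simp
  then show "(\<lambda>\<omega>. \<omega> (\<rho> i)) \<in> PiM I (\<lambda>_. M) \<rightarrow>\<^sub>M M"
    by (rule measurable_component_singleton)
next
  show "(\<lambda>\<omega> i. \<omega> (\<rho> i)) \<in> space (PiM I (\<lambda>_. M)) \<rightarrow> PiE I (\<lambda>_. space M)"
    using permutes_in_image[OF assms] permutes_not_in[OF assms]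
    by (auto simp: space_PiM PiE_iff extensional_def)
qed

lemma measurable_permute_symmetric_measure:
  assumes "symmetric_measure n \<mu>" and "\<rho> permutes {..<n}"
  shows "(\<lambda>\<xi>. \<xi> \<circ> \<rho>) \<in> \<mu> \<rightarrow>\<^sub>M \<mu>"
proof -
  have sets_\<mu>: "sets \<mu> = sets (PiM {..<n} (\<lambda>_. borel))"
    using assms(1) by (simp add: symmetric_measure_def)
  show ?thesis
    unfolding measurable_cong_sets[OF sets_\<mu> sets_\<mu>] by (rule measurable_permute_coordinates[OF assms(2)])
qed

lemma nn_integral_permute_symmetric_measure:
  assumes "symmetric_measure n \<mu>" and "\<rho> permutes {..<n}" and "f \<in> borel_measurable \<mu>"
  shows "(\<integral>\<^sup>+\<xi>. f (\<xi> \<circ> \<rho>) \<partial>\<mu>) = (\<integral>\<^sup>+\<xi>. f \<xi> \<partial>\<mu>)"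
proof -
  have perm: "(\<lambda>\<xi>. \<xi> \<circ> \<rho>) \<in> \<mu> \<rightarrow>\<^sub>M \<mu>"
    using assms(1,2) by (rule measurable_permute_symmetric_measure)
  have "distr \<mu> \<mu> (\<lambda>\<xi>. \<xi> \<circ> \<rho>) = \<mu>"
    using assms(1,2) perm by (intro measure_eqI) (auto simp: emeasure_distr symmetric_measure_def)
  then have "(\<integral>\<^sup>+\<xi>. f \<xi> \<partial>\<mu>) = (\<integral>\<^sup>+\<xi>. f \<xi> \<partial>distr \<mu> \<mu> (\<lambda>\<xi>. \<xi> \<circ> \<rho>))"
    by simp
  also have "\<dots> = (\<integral>\<^sup>+\<xi>. f (\<xi> \<circ> \<rho>) \<partial>\<mu>)"
    using \<open>distr \<mu> \<mu> (\<lambda>\<xi>. \<xi> \<circ> \<rho>) = \<mu>\<close> assms(3) by (intro nn_integral_distr[OF perm]) simp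
  finally show ?thesis ..
qed

lemma nn_integral_mult_permute_le:
  fixes f g :: "(nat \<Rightarrow> 'a::euclidean_space) \<Rightarrow> real"
  assumes "symmetric_measure n \<mu>" and "\<rho> permutes {..<n}"
    and [measurable]: "f \<in> borel_measurable \<mu>" "g \<in> borel_measurable \<mu>"
  shows "(\<integral>\<^sup>+\<xi>. ennreal (f \<xi> * g (\<xi> \<circ> \<rho>)) \<partial>\<mu>)
    \<le> ennreal (1/2) * (\<integral>\<^sup>+\<xi>. ennreal (\<bar>f \<xi>\<bar>^2) \<partial>\<mu>) + ennreal (1/2) * (\<integral>\<^sup>+\<xi>. ennreal (\<bar>g \<xi>\<bar>^2) \<partial>\<mu>)"
proof -
  have [measurable]: "(\<lambda>\<xi>. \<xi> \<circ> \<rho>) \<in> \<mu> \<rightarrow>\<^sub>M \<mu>"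
    using assms(1,2) by (rule measurable_permute_symmetric_measure)
  have "(\<integral>\<^sup>+\<xi>. ennreal (f \<xi> * g (\<xi> \<circ> \<rho>)) \<partial>\<mu>)
      \<le> (\<integral>\<^sup>+\<xi>. ennreal (1/2) * ennreal (\<bar>f \<xi>\<bar>^2) + ennreal (1/2) * ennreal (\<bar>g (\<xi> \<circ> \<rho>)\<bar>^2) \<partial>\<mu>)"
    by (intro nn_integral_mono ennreal_mult_le_half_sum_squares)
  also have "\<dots> = ennreal (1/2) * (\<integral>\<^sup>+\<xi>. ennreal (\<bar>f \<xi>\<bar>^2) \<partial>\<mu>)
      + ennreal (1/2) * (\<integral>\<^sup>+\<xi>. ennreal (\<bar>g (\<xi> \<circ> \<rho>)\<bar>^2) \<partial>\<mu>)"
    by (simp add: nn_integral_add nn_integral_cmult)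
  also have "(\<integral>\<^sup>+\<xi>. ennreal (\<bar>g (\<xi> \<circ> \<rho>)\<bar>^2) \<partial>\<mu>) = (\<integral>\<^sup>+\<xi>. ennreal (\<bar>g \<xi>\<bar>^2) \<partial>\<mu>)"
    using assms(1,2) by (rule nn_integral_permute_symmetric_measure) measurable
  finally show ?thesis .
qed

lemma nn_set_integral_iterated_permute_le:
  fixes h :: "'b \<Rightarrow> (nat \<Rightarrow> 'a::euclidean_space) \<Rightarrow> real"
  assumes "symmetric_measure n \<mu>" and "\<rho> permutes {..<n}"
    and "A \<in> sets M" and "B \<in> sets M" and "emeasure M B < \<infinity>"
    and "\<And>x. x \<in> space M \<Longrightarrow> h x \<in> borel_measurable \<mu>"
  shows "(\<integral>\<^sup>+x\<in>A. (\<integral>\<^sup>+y\<in>B. (\<integral>\<^sup>+\<xi>. ennreal (h x \<xi> * h y (\<xi> \<circ> \<rho>)) \<partial>\<mu>) \<partial>M) \<partial>M)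
    \<le> ennreal (1/2) * (emeasure M B * (\<integral>\<^sup>+x\<in>A. (\<integral>\<^sup>+\<xi>. ennreal (\<bar>h x \<xi>\<bar>^2) \<partial>\<mu>) \<partial>M)
                      + emeasure M A * (\<integral>\<^sup>+y\<in>B. (\<integral>\<^sup>+\<xi>. ennreal (\<bar>h y \<xi>\<bar>^2) \<partial>\<mu>) \<partial>M))"
    (is "_ \<le> ennreal (1/2) * (_ * (\<integral>\<^sup>+x\<in>A. ?Q x \<partial>M) + _ * (\<integral>\<^sup>+y\<in>B. ?Q y \<partial>M))")
proof -
  have "(\<integral>\<^sup>+x\<in>A. (\<integral>\<^sup>+y\<in>B. (\<integral>\<^sup>+\<xi>. ennreal (h x \<xi> * h y (\<xi> \<circ> \<rho>)) \<partial>\<mu>) \<partial>M) \<partial>M)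
      \<le> emeasure M B * (\<integral>\<^sup>+x\<in>A. ennreal (1/2) * ?Q x \<partial>M)
        + emeasure M A * (\<integral>\<^sup>+y\<in>B. ennreal (1/2) * ?Q y \<partial>M)"
    using assms(3-5)
  proof (rule nn_set_integral_iterated_le_separable)
    fix x y assume "x \<in> A" "y \<in> B"
    then show "(\<integral>\<^sup>+\<xi>. ennreal (h x \<xi> * h y (\<xi> \<circ> \<rho>)) \<partial>\<mu>) \<le> ennreal (1/2) * ?Q x + ennreal (1/2) * ?Q y"
      using sets.sets_into_space[OF assms(3)] sets.sets_into_space[OF assms(4)] assms(1,2,6)
      by (intro nn_integral_mult_permute_le) auto
  qed
  also have "\<dots> \<le> emeasure M B * (ennreal (1/2) * (\<integral>\<^sup>+x\<in>A. ?Q x \<partial>M))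
      + emeasure M A * (ennreal (1/2) * (\<integral>\<^sup>+y\<in>B. ?Q y \<partial>M))"
    by (intro add_mono mult_left_mono nn_set_integral_cmult_le) (auto simp del: ennreal_half)
  finally show ?thesis
    by (simp add: algebra_simps)
qed

lemma simplexT_mono: "s \<le> t \<Longrightarrow> simplexT n s \<subseteq> simplexT n t"
  unfolding simplexT_def by auto

lemma sets_simplexT: "simplexT n t \<in> sets (lebn n)"
proof -
  have "simplexT n t = {x \<in> space (lebn n). (\<forall>i\<in>{..<n}. 0 < x i \<and> x i < t) \<and>
      (\<forall>i\<in>{..<n - 1}. x i < x (Suc i))}"
    by (auto simp: simplexT_def lebn_def space_PiM)
  also have "\<dots> \<in> sets (lebn n)"
    unfolding lebn_def by measurable
  finally show ?thesis .
qed

lemma simplexT_Suc_slice: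
  assumes "x \<in> space (lebn n)" and "x(n := y) \<in> simplexT (Suc n) t"
  shows "y \<in> {0<..<t}" and "x \<in> simplexT n y"
proof -
  let ?x = "x(n := y)"
  have bounds: "0 < ?x i \<and> ?x i < t" if "i < Suc n" for i
    using assms(2) that unfolding simplexT_def by blast
  have incr: "?x i < ?x (Suc i)" if "Suc i < Suc n" for i
    using assms(2) that unfolding simplexT_def by blast
  show "y \<in> {0<..<t}"
    using bounds[of n] by simp
  have "x i < y" if "i < n" for i
  proof -
    have "?x i < ?x n"
      by (rule lift_Suc_mono_less_ivl[of "{..<n}"]) (use incr that in auto)
    then show ?thesis
      using that by simp
  qed
  moreover have "0 < x i" if "i < n" for i
    using bounds[of i] that by simp
  moreover have "x i < x (Suc i)" if "Suc i < n" for i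
    using incr[of i] that by simp
  ultimately show "x \<in> simplexT n y"
    using assms(1) by (auto simp: simplexT_def lebn_def space_PiM)
qed

lemma emeasure_simplexT_le: "0 \<le> t \<Longrightarrow> emeasure (lebn n) (simplexT n t) \<le> ennreal (t ^ n / fact n)"
proof (induction n arbitrary: t)
  case 0
  have "emeasure (lebn 0) (simplexT 0 t) \<le> emeasure (lebn 0) (space (lebn 0))"
    using sets.sets_into_space[OF sets_simplexT] by (intro emeasure_mono) auto
  also have "\<dots> = 1"
    by (simp add: lebn_def PiM_empty)
  finally show ?case
    by simp
next
  case (Suc n)
  interpret product_sigma_finite "\<lambda>_. lborel"
    by standard
  have "emeasure (lebn (Suc n)) (simplexT (Suc n) t)
      = (\<integral>\<^sup>+y. (\<integral>\<^sup>+x. indicator (simplexT (Suc n) t) (x(n := y)) \<partial>lebn n) \<partial>lborel)"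
    using sets_simplexT[of "Suc n" t] unfolding lebn_def lessThan_Suc
    by (simp add: product_nn_integral_insert_rev flip: nn_integral_indicator)
  also have "\<dots> \<le> (\<integral>\<^sup>+y. (\<integral>\<^sup>+x. indicator {0<..<t} y * indicator (simplexT n y) x \<partial>lebn n) \<partial>lborel)"
    using simplexT_Suc_slice by (intro nn_integral_mono) (auto split: split_indicator)
  also have "\<dots> = (\<integral>\<^sup>+y. indicator {0<..<t} y * emeasure (lebn n) (simplexT n y) \<partial>lborel)"
    by (intro nn_integral_cong nn_integral_cmult_indicator sets_simplexT)
  also have "\<dots> \<le> (\<integral>\<^sup>+y. ennreal (y ^ n / fact n) * indicator {0..t} y \<partial>lborel)"
    using Suc.IH by (intro nn_integral_mono) (auto split: split_indicator)
  also have "\<dots> = ennreal (t ^ Suc n / fact (Suc n) - 0 ^ Suc n / fact (Suc n))"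
  proof (rule nn_integral_FTC_Icc)
    fix y :: real
    show "((\<lambda>y. y ^ Suc n / fact (Suc n)) has_real_derivative y ^ n / fact n) (at y)"
      using DERIV_cdivide[OF DERIV_pow[of "Suc n" y], of "fact (Suc n)"]
      by (simp add: fact_Suc del: of_nat_Suc)
  qed (use Suc.prems in auto)
  finally show ?case
    by simp
qed

lemma fact_mult_emeasure_simplexT_le:
  assumes "0 \<le> t"
  shows "of_nat (fact n) * emeasure (lebn n) (simplexT n t) \<le> ennreal (t ^ n)"
proof -
  have "of_nat (fact n) * emeasure (lebn n) (simplexT n t) \<le> ennreal (fact n) * ennreal (t ^ n / fact n)"
    using emeasure_simplexT_le[OF assms] by (simp add: ennreal_of_nat_eq_real_of_nat mult_left_mono)
  also have "\<dots> = ennreal (t ^ n)"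
    using assms by (simp flip: ennreal_mult)
  finally show ?thesis .
qed

lemma emeasure_simplexT_less_top: "emeasure (lebn n) (simplexT n t) < \<infinity>"
proof -
  have "emeasure (lebn n) (simplexT n t) \<le> emeasure (lebn n) (simplexT n \<bar>t\<bar>)"
    by (intro emeasure_mono simplexT_mono sets_simplexT) simp
  also have "\<dots> \<le> ennreal (\<bar>t\<bar> ^ n / fact n)"
    by (rule emeasure_simplexT_le) simp
  finally show ?thesis
    by (simp add: order_le_less_trans)
qed

theorem lemmaA1:
  fixes n :: nat and \<mu> :: "(nat \<Rightarrow> 'a::euclidean_space) measure"
    and h :: "(nat \<Rightarrow> real) \<Rightarrow> (nat \<Rightarrow> 'a) \<Rightarrow> real"
    and s t :: real
  assumes "n \<ge> 1"
    and "symmetric_measure n \<mu>"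
    and "0 < s" and "s \<le> t"
    and "(\<lambda>(x, \<xi>). h x \<xi>) \<in> borel_measurable (lebn n \<Otimes>\<^sub>M PiM {..<n} (\<lambda>_. (borel :: 'a measure)))"
    and "\<And>x \<xi>. h x \<xi> \<ge> 0"
  shows "(\<Sum>\<rho>\<in>{\<rho>. \<rho> permutes {..<n}}.
            \<integral>\<^sup>+ tt \<in> simplexT n t. (\<integral>\<^sup>+ ss \<in> simplexT n s.
               (\<integral>\<^sup>+ \<xi>. ennreal (h tt \<xi> * h ss (\<xi> \<circ> \<rho>)) \<partial>\<mu>) \<partial>lebn n) \<partial>lebn n)
         \<le> ennreal ((s ^ n + t ^ n) / 2) *
            (\<integral>\<^sup>+ tt \<in> simplexT n t. (\<integral>\<^sup>+ \<xi>. ennreal (\<bar>h tt \<xi>\<bar> ^ 2) \<partial>\<mu>) \<partial>lebn n)"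
proof -
  let ?L = "lebn n" and ?T = "simplexT n t" and ?S = "simplexT n s"
  define I where "I = (\<integral>\<^sup>+x\<in>?T. (\<integral>\<^sup>+\<xi>. ennreal (\<bar>h x \<xi>\<bar>^2) \<partial>\<mu>) \<partial>?L)"
  define J where "J = (\<integral>\<^sup>+x\<in>?S. (\<integral>\<^sup>+\<xi>. ennreal (\<bar>h x \<xi>\<bar>^2) \<partial>\<mu>) \<partial>?L)"
  have sets_\<mu>: "sets \<mu> = sets (PiM {..<n} (\<lambda>_. borel))"
    using assms(2) by (simp add: symmetric_measure_def)
  have h_meas: "h x \<in> borel_measurable \<mu>" if "x \<in> space ?L" for x
    unfolding measurable_cong_sets[OF sets_\<mu> refl] using measurable_Pair2[OF assms(5) that] by simp
  have "J \<le> I"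
    unfolding I_def J_def using simplexT_mono[OF assms(4)] by (rule nn_set_integral_set_mono)
  have "(\<Sum>\<rho>\<in>{\<rho>. \<rho> permutes {..<n}}.
            \<integral>\<^sup>+ tt \<in> ?T. (\<integral>\<^sup>+ ss \<in> ?S.
               (\<integral>\<^sup>+ \<xi>. ennreal (h tt \<xi> * h ss (\<xi> \<circ> \<rho>)) \<partial>\<mu>) \<partial>?L) \<partial>?L)
      \<le> (\<Sum>\<rho>\<in>{\<rho>. \<rho> permutes {..<n}}. ennreal (1/2) * (emeasure ?L ?S * I + emeasure ?L ?T * J))"
    unfolding I_def J_def using assms(2) h_meas
    by (intro sum_mono nn_set_integral_iterated_permute_le sets_simplexT emeasure_simplexT_less_top) auto
  also have "\<dots> = ennreal (1/2) * ((of_nat (fact n) * emeasure ?L ?S) * I + (of_nat (fact n) * emeasure ?L ?T) * J)"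
    by (simp add: card_permutations algebra_simps)
  also have "\<dots> \<le> ennreal (1/2) * (ennreal (s ^ n) * I + ennreal (t ^ n) * I)"
    using fact_mult_emeasure_simplexT_le assms(3,4) \<open>J \<le> I\<close>
    by (intro mult_left_mono add_mono mult_mono) auto
  also have "\<dots> = ennreal (1/2) * (ennreal (s ^ n) + ennreal (t ^ n)) * I"
    by (simp only: distrib_right mult.assoc)
  also have "ennreal (1/2) * (ennreal (s ^ n) + ennreal (t ^ n)) = ennreal ((s ^ n + t ^ n) / 2)"
    using assms(3,4) by (simp del: ennreal_half flip: ennreal_plus ennreal_mult)
  finally show ?thesis
    unfolding I_def .
qed

end
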